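(* Under the setting below, for any $1\le j_1\le j_2\le H-1$, any trajectory $\tau_{j_1-1}$, any policy $\pi$, any $f\in\mathcal{F}$ and any $x\in\mathbb{R}^{|\mathcal{U}_{j_1}|}$, $$\sum_{\tau_{j_1:j_2}}\big\|M_{o_{j_2},a_{j_2},j_2;f}\cdots M_{o_{j_1},a_{j_1},j_1;f}\,x\big\|_1\,\pi(\tau_{j_1:j_2}\mid\tau_{j_1-1})\le\frac{|\mathcal{U}_A|}{\alpha}\|x\|_1,$$ where the sum is over $\tau_{j_1:j_2}=(o_{j_1},a_{j_1},\dots,o_{j_2},a_{j_2})$ and $\pi(\tau_{j_1:j_2}\mid\tau_{j_1-1})=\prod_{j=j_1}^{j_2}\pi_j(a_j\mid\tau_{j_1-1},o_{j_1},a_{j_1},\dots,o_j)$.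
   Context: Process: finite $\mathcal{O},\mathcal{A}$, horizon $H$; histories $\tau_h=(o_1,a_1,\dots,o_h,a_h)$; policies pick $a_h\sim\pi_h(\cdot\mid\tau_{h-1},o_h)$. For a model $f$: a test starting at step $h$ is $t=(o_h,\dots,o_{h+W-1},a_h,\dots,a_{h+W-2})$; $\mathbb{P}_f(t\mid\tau_{h-1})$ is the probability of observing $o_{h:h+W-1}$ when executing $a_{h:h+W-2}$ after $\tau_{h-1}$ ($0$ if unreachable). A set $\mathcal{U}_h$ of tests starting at $h$ is a core test set if for every test $t$ starting at $h$ there is a history-independent $m_{t,h;f}$ with $\mathbb{P}_f(t\mid\tau_{h-1})=\langle m_{t,h;f},q_{\tau_{h-1};f}\rangle$, $q_{\tau_{h-1};f}=[\mathbb{P}_f(u\mid\tau_{h-1})]_{u\in\mathcal{U}_h}$; $q_{0;f}=[\mathbb{P}_f(u)]_{u\in\mathcal{U}_1}$; $M_{o,a,h;f}$ has rows $m_{(o,a,u),h;f}^\top$, $u\in\mathcal{U}_{h+1}$. $\mathcal{U}_{A,h}$: action sequences in $\mathcal{U}_h$; $|\mathcal{U}_A|=\max_h|\mathcal{U}_{A,h}|$. $d_{\mathrm{PSR},h;f}$ is the rank of the matrix with entries $\mathbb{P}_f(t\mid\tau_h)$. Core matrix $K_{h;f}$ ($h\ge1$): columns $q_{\tau_h^1;f},\dots,q_{\tau_h^{d_{\mathrm{PSR},h;f}};f}$ for histories whose predictive states span all $q_{\tau_h;f}$, chosen to minimize $\|K_{h;f}^\dagger\|_{1\to1}$; $K_{0;f}=q_{0;f}$.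 Standing assumptions: $\mathcal{F}$ is a model class each of whose members is a valid PSR with core test sets $\{\mathcal{U}_h\}_{h\in[H]}$ and $\|K_{h;f}^\dagger\|_{1\to1}\le1/\alpha$ for $h\in\{0,\dots,H-1\}$; every $o\in\mathcal{O}$ belongs to $\mathcal{U}_H$. Convention: for every $f\in\mathcal{F}$ the vectors $m_{(o,a,u),h;f}$ are chosen in the column space of $K_{h-1;f}$ (such a choice exists and leaves the trajectory distributions unchanged). *)

theory Defs
  imports "HOL-Analysis.Analysis" "HOL-Library.Function_Algebras"
begin

text \<open>Histories are lists of (observation, action) pairs; a history of length h is tau_h.
  A test starting at step h is a pair (o_h..o_{h+W-1}, a_h..a_{h+W-2}).
  A model f is given by its conditional observation probabilities:
  f h tau ob = P_f(o_h = ob | tau_{h-1}), where length tau = h - 1.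
  A policy pi h tau ob a = pi_h(a | tau_{h-1}, o_h = ob).\<close>

type_synonym ('ob, 'a) hist = "('ob \<times> 'a) list"
type_synonym ('ob, 'a) test = "'ob list \<times> 'a list"
type_synonym ('ob, 'a) model = "nat \<Rightarrow> ('ob, 'a) hist \<Rightarrow> 'ob \<Rightarrow> real"
type_synonym ('ob, 'a) policy = "nat \<Rightarrow> ('ob, 'a) hist \<Rightarrow> 'ob \<Rightarrow> 'a \<Rightarrow> real"

definition valid_model :: "nat \<Rightarrow> ('ob::finite, 'a) model \<Rightarrow> bool" where
  "valid_model H f \<longleftrightarrow> (\<forall>h \<tau>. 1 \<le> h \<and> h \<le> H \<and> length \<tau> = h - 1 \<longrightarrow>
      (\<forall>ob. 0 \<le> f h \<tau> ob) \<and> (\<Sum>ob\<in>UNIV. f h \<tau> ob) = 1)"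

definition valid_policy :: "nat \<Rightarrow> ('ob, 'a::finite) policy \<Rightarrow> bool" where
  "valid_policy H \<pi> \<longleftrightarrow> (\<forall>h \<tau> ob. 1 \<le> h \<and> h \<le> H \<and> length \<tau> = h - 1 \<longrightarrow>
      (\<forall>a. 0 \<le> \<pi> h \<tau> ob a) \<and> (\<Sum>a\<in>UNIV. \<pi> h \<tau> ob a) = 1)"

definition hist_prob :: "('ob, 'a) model \<Rightarrow> ('ob, 'a) hist \<Rightarrow> real" where
  "hist_prob f \<tau> = (\<Prod>k<length \<tau>. f (Suc k) (take k \<tau>) (fst (\<tau> ! k)))"

text \<open>t is a test starting at step h (with window W = length of its observation list,
  W >= 1, and last observation step h + W - 1 <= H).\<close>
definition is_test :: "nat \<Rightarrow> nat \<Rightarrow> ('ob, 'a) test \<Rightarrow> bool" where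
  "is_test H h t \<longleftrightarrow> length (fst t) = Suc (length (snd t)) \<and> h + length (fst t) \<le> Suc H"

text \<open>P_f(t | tau_{h-1}); 0 if tau_{h-1} is unreachable.\<close>
definition test_prob :: "('ob, 'a) model \<Rightarrow> nat \<Rightarrow> ('ob, 'a) hist \<Rightarrow> ('ob, 'a) test \<Rightarrow> real" where
  "test_prob f h \<tau> t = (if hist_prob f \<tau> > 0 then
      (\<Prod>k<length (fst t). f (h + k) (\<tau> @ zip (take k (fst t)) (take k (snd t))) (fst t ! k))
    else 0)"

text \<open>Vectors in R^{U_h} are functions on tests (only values on U_h matter).\<close>
definition fscale :: "real \<Rightarrow> ('t \<Rightarrow> real) \<Rightarrow> ('t \<Rightarrow> real)" where
  "fscale c v = (\<lambda>u. c * v u)"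

abbreviation fspan :: "('t \<Rightarrow> real) set \<Rightarrow> ('t \<Rightarrow> real) set" where
  "fspan \<equiv> module.span fscale"

abbreviation fdim :: "('t \<Rightarrow> real) set \<Rightarrow> nat" where
  "fdim \<equiv> vector_space.dim fscale"

lemma vector_space_fscale: "vector_space (fscale :: real \<Rightarrow> ('t \<Rightarrow> real) \<Rightarrow> _)"
  by unfold_locales (auto simp: fscale_def fun_eq_iff algebra_simps)

definition l1norm :: "'t set \<Rightarrow> ('t \<Rightarrow> real) \<Rightarrow> real" where
  "l1norm S v = (\<Sum>u\<in>S. \<bar>v u\<bar>)"

definition pred_state :: "('ob, 'a) model \<Rightarrow> (nat \<Rightarrow> ('ob, 'a) test set) \<Rightarrow> nat
    \<Rightarrow> ('ob, 'a) hist \<Rightarrow> ('ob, 'a) test \<Rightarrow> real" where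
  "pred_state f U h \<tau> = (\<lambda>u. if u \<in> U h then test_prob f h \<tau> u else 0)"

definition core_test_sets :: "nat \<Rightarrow> ('ob, 'a) model \<Rightarrow> (nat \<Rightarrow> ('ob, 'a) test set) \<Rightarrow> bool" where
  "core_test_sets H f U \<longleftrightarrow> (\<forall>h\<in>{1..H}. finite (U h) \<and> (\<forall>u\<in>U h. is_test H h u) \<and>
     (\<forall>t. is_test H h t \<longrightarrow> (\<exists>m. \<forall>\<tau>. length \<tau> = h - 1 \<longrightarrow>
        test_prob f h \<tau> t = (\<Sum>u\<in>U h. m u * test_prob f h \<tau> u))))"

text \<open>d_{PSR,h;f}: rank of the matrix with entries P_f(t | tau_h) (rows: tests t starting at
  h+1, columns: histories tau_h), i.e. the dimension of the span of its columns.\<close>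
definition d_psr :: "nat \<Rightarrow> ('ob, 'a) model \<Rightarrow> nat \<Rightarrow> nat" where
  "d_psr H f h = fdim {(\<lambda>t. if is_test H (Suc h) t then test_prob f (Suc h) \<tau> t else 0)
                       | \<tau>. length \<tau> = h}"

definition mat_mul :: "'k set \<Rightarrow> ('i \<Rightarrow> 'k \<Rightarrow> real) \<Rightarrow> ('k \<Rightarrow> 'j \<Rightarrow> real) \<Rightarrow> 'i \<Rightarrow> 'j \<Rightarrow> real" where
  "mat_mul S A B = (\<lambda>i j. \<Sum>k\<in>S. A i k * B k j)"

definition pinv :: "'r set \<Rightarrow> 'c set \<Rightarrow> ('r \<Rightarrow> 'c \<Rightarrow> real) \<Rightarrow> 'c \<Rightarrow> 'r \<Rightarrow> real" where
  "pinv R C K = (THE X. (\<forall>i j. i \<notin> C \<or> j \<notin> R \<longrightarrow> X i j = 0) \<and>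
     (\<forall>i\<in>R. \<forall>j\<in>C. mat_mul R (mat_mul C K X) K i j = K i j) \<and>
     (\<forall>i\<in>C. \<forall>j\<in>R. mat_mul C (mat_mul R X K) X i j = X i j) \<and>
     (\<forall>i\<in>R. \<forall>j\<in>R. mat_mul C K X i j = mat_mul C K X j i) \<and>
     (\<forall>i\<in>C. \<forall>j\<in>C. mat_mul R X K i j = mat_mul R X K j i))"

definition opnorm11_le :: "'r set \<Rightarrow> 'c set \<Rightarrow> ('c \<Rightarrow> 'r \<Rightarrow> real) \<Rightarrow> real \<Rightarrow> bool" where
  "opnorm11_le R C X b \<longleftrightarrow> (\<forall>y. l1norm C (\<lambda>i. \<Sum>j\<in>R. X i j * y j) \<le> b * l1norm R y)"

definition core_mat :: "('ob, 'a) model \<Rightarrow> (nat \<Rightarrow> ('ob, 'a) test set) \<Rightarrow> nat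
    \<Rightarrow> ('ob, 'a) hist list \<Rightarrow> ('ob, 'a) test \<Rightarrow> nat \<Rightarrow> real" where
  "core_mat f U h hs = (\<lambda>u i. pred_state f U (Suc h) (hs ! i) u)"

text \<open>For h >= 1, K_{h;f} is a
  minimiser over admissible choices of histories (finitely many), so the bound holds iff some
  admissible choice satisfies it. K_{0;f} = q_{0;f}.\<close>
definition core_bound :: "nat \<Rightarrow> ('ob, 'a) model \<Rightarrow> (nat \<Rightarrow> ('ob, 'a) test set) \<Rightarrow> real \<Rightarrow> nat \<Rightarrow> bool" where
  "core_bound H f U \<alpha> h \<longleftrightarrow>
    (if h = 0 then opnorm11_le (U 1) {..<1} (pinv (U 1) {..<1} (core_mat f U 0 [[]])) (1 / \<alpha>)
     else (\<exists>hs. length hs = d_psr H f h \<and> (\<forall>\<tau>\<in>set hs. length \<tau> = h) \<and>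
        (\<forall>\<tau>. length \<tau> = h \<longrightarrow> pred_state f U (Suc h) \<tau> \<in> fspan (pred_state f U (Suc h) ` set hs)) \<and>
        opnorm11_le (U (Suc h)) {..<length hs}
           (pinv (U (Suc h)) {..<length hs} (core_mat f U h hs)) (1 / \<alpha>)))"

text \<open>m_{t,h;f}, chosen (uniquely) in the column space of K_{h-1;f}, which is the span of all
  predictive states q_{tau_{h-1};f}.\<close>
definition m_vec :: "('ob, 'a) model \<Rightarrow> (nat \<Rightarrow> ('ob, 'a) test set) \<Rightarrow> nat
    \<Rightarrow> ('ob, 'a) test \<Rightarrow> ('ob, 'a) test \<Rightarrow> real" where
  "m_vec f U h t = (THE m. m \<in> fspan {pred_state f U h \<tau> | \<tau>. length \<tau> = h - 1} \<and>
     (\<forall>\<tau>. length \<tau> = h - 1 \<longrightarrow> test_prob f h \<tau> t = (\<Sum>u\<in>U h. m u * pred_state f U h \<tau> u)))"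

definition M_apply :: "('ob, 'a) model \<Rightarrow> (nat \<Rightarrow> ('ob, 'a) test set) \<Rightarrow> 'ob \<Rightarrow> 'a \<Rightarrow> nat
    \<Rightarrow> (('ob, 'a) test \<Rightarrow> real) \<Rightarrow> ('ob, 'a) test \<Rightarrow> real" where
  "M_apply f U ob a h x = (\<lambda>u. if u \<in> U (Suc h)
      then (\<Sum>v\<in>U h. m_vec f U h (ob # fst u, a # snd u) v * x v) else 0)"

fun M_prod :: "('ob, 'a) model \<Rightarrow> (nat \<Rightarrow> ('ob, 'a) test set) \<Rightarrow> nat \<Rightarrow> ('ob, 'a) hist
    \<Rightarrow> (('ob, 'a) test \<Rightarrow> real) \<Rightarrow> ('ob, 'a) test \<Rightarrow> real" where
  "M_prod f U h [] x = x"
| "M_prod f U h ((ob, a) # rest) x = M_prod f U (Suc h) rest (M_apply f U ob a h x)"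

definition pol_prob :: "('ob, 'a) policy \<Rightarrow> nat \<Rightarrow> ('ob, 'a) hist \<Rightarrow> ('ob, 'a) hist \<Rightarrow> real" where
  "pol_prob \<pi> j1 \<tau> seg = (\<Prod>k<length seg. \<pi> (j1 + k) (\<tau> @ take k seg) (fst (seg ! k)) (snd (seg ! k)))"

definition UA_card :: "nat \<Rightarrow> (nat \<Rightarrow> ('ob, 'a) test set) \<Rightarrow> nat" where
  "UA_card H U = Max ((\<lambda>h. card (snd ` U h)) ` {1..H})"

end

theory Submission
  imports Defs
begin

(*
  Let K be the core matrix of step j1 - 1 and z = K\<dagger> x. The residual x - K z is orthogonal
  to the columns of K, hence to every predictive state at step j1, and therefore to every vector
  m_{t,j1;f}, which by convention lies in their span. So the operators M do not distinguish x
  from K z = \<Sum>\<^sub>i z\<^sub>i q(\<tau>\<^sub>i). Applied to a predictive state q(\<tau>), the product of the M's gives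
  P_f(o_{j1:j2} | \<tau>, a_{j1:j2}) times the predictive state of the extended history, whose l1 norm
  is at most |U_A| because for each fixed action sequence the test probabilities sum to at most 1.
  Summed against \<pi>, the weights P_f \<cdot> \<pi> form a probability distribution over segments, so each
  q(\<tau>\<^sub>i) contributes at most |U_A|, and the triangle inequality gives the bound
  |U_A| \<parallel>z\<parallel>\<^sub>1 \<le> |U_A| / \<alpha> \<parallel>x\<parallel>\<^sub>1.

  The pseudo-inverse is given only implicitly by the Penrose equations; it is constructed from
  solutions of the normal equations of K and of its transpose, which come from a Gram--Schmidt
  induction.
*)

section \<open>Matrices indexed by sets\<close>

definition mat_transpose :: "('i \<Rightarrow> 'j \<Rightarrow> real) \<Rightarrow> 'j \<Rightarrow> 'i \<Rightarrow> real" where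
  "mat_transpose A = (\<lambda>j i. A i j)"

definition mat_supp :: "'i set \<Rightarrow> 'j set \<Rightarrow> ('i \<Rightarrow> 'j \<Rightarrow> real) \<Rightarrow> bool" where
  "mat_supp I J A \<longleftrightarrow> (\<forall>i j. i \<notin> I \<or> j \<notin> J \<longrightarrow> A i j = 0)"

definition mat_restrict :: "'i set \<Rightarrow> 'j set \<Rightarrow> ('i \<Rightarrow> 'j \<Rightarrow> real) \<Rightarrow> 'i \<Rightarrow> 'j \<Rightarrow> real" where
  "mat_restrict I J A = (\<lambda>i j. if i \<in> I \<and> j \<in> J then A i j else 0)"

lemma mat_mul_assoc: "mat_mul T (mat_mul S A B) D = mat_mul S A (mat_mul T B D)"
  unfolding mat_mul_def fun_eq_iff sum_distrib_left sum_distrib_right mult.assoc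
  by (auto intro: sum.swap)

lemma mat_transpose_transpose [simp]: "mat_transpose (mat_transpose A) = A"
  by (simp add: mat_transpose_def)

lemma mat_transpose_apply [simp]: "mat_transpose A j i = A i j"
  by (simp add: mat_transpose_def)

lemma mat_transpose_mul: "mat_transpose (mat_mul S A B) = mat_mul S (mat_transpose B) (mat_transpose A)"
  by (simp add: mat_transpose_def mat_mul_def fun_eq_iff mult.commute)

lemma mat_transpose_eq_iff: "mat_transpose A = mat_transpose B \<longleftrightarrow> A = B"
  by (metis mat_transpose_transpose)

lemma mat_supp_mul: "mat_supp I S A \<Longrightarrow> mat_supp S J B \<Longrightarrow> mat_supp I J (mat_mul S A B)"
  by (auto simp: mat_supp_def mat_mul_def)

lemma mat_supp_transpose: "mat_supp I J A \<Longrightarrow> mat_supp J I (mat_transpose A)"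
  by (auto simp: mat_supp_def mat_transpose_def)

lemma mat_supp_restrict: "mat_supp I J (mat_restrict I J A)"
  by (simp add: mat_supp_def mat_restrict_def)

lemma mat_supp_eq_iff:
  "mat_supp I J A \<Longrightarrow> mat_supp I J B \<Longrightarrow> A = B \<longleftrightarrow> (\<forall>i\<in>I. \<forall>j\<in>J. A i j = B i j)"
  unfolding mat_supp_def fun_eq_iff by metis

section \<open>The Moore--Penrose pseudo-inverse\<close>

lemma orthogonal_residual_exists:
  fixes v w :: "'r \<Rightarrow> real"
  assumes "finite R"
  shows "\<exists>t. (\<Sum>r\<in>R. (w r - t * v r) * v r) = 0"
proof -
  have expand: "(\<Sum>r\<in>R. (w r - t * v r) * v r) = (\<Sum>r\<in>R. w r * v r) - t * (\<Sum>r\<in>R. v r * v r)" for t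
    by (simp add: left_diff_distrib sum_subtractf sum_distrib_left mult.assoc)
  show ?thesis
  proof (cases "(\<Sum>r\<in>R. v r * v r) = 0")
    case True
    then have "\<forall>r\<in>R. v r = 0"
      using assms by (simp add: sum_nonneg_eq_0_iff)
    then show ?thesis by simp
  next
    case False
    then show ?thesis
      by (intro exI[of _ "(\<Sum>r\<in>R. w r * v r) / (\<Sum>r\<in>R. v r * v r)"]) (simp only: expand, simp)
  qed
qed

lemma least_squares_exists:
  fixes col :: "'c \<Rightarrow> 'r \<Rightarrow> real"
  assumes R: "finite R" and C: "finite C"
  shows "\<exists>c. \<forall>j\<in>C. (\<Sum>r\<in>R. (y r - (\<Sum>k\<in>C. c k * col k r)) * col j r) = 0"
  using C
proof (induction C arbitrary: y rule: finite_induct)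
  case empty
  then show ?case by simp
next
  case (insert a C)
  obtain d where d: "\<forall>j\<in>C. (\<Sum>r\<in>R. (col a r - (\<Sum>k\<in>C. d k * col k r)) * col j r) = 0"
    using insert.IH by blast
  obtain e where e: "\<forall>j\<in>C. (\<Sum>r\<in>R. (y r - (\<Sum>k\<in>C. e k * col k r)) * col j r) = 0"
    using insert.IH by blast
  \<comment> \<open>Gram--Schmidt step: v is the part of col a orthogonal to the columns in C.\<close>
  define v where "v = (\<lambda>r. col a r - (\<Sum>k\<in>C. d k * col k r))"
  define y1 where "y1 = (\<lambda>r. y r - (\<Sum>k\<in>C. e k * col k r))"
  obtain t where "(\<Sum>r\<in>R. (y1 r - t * v r) * v r) = 0"
    using orthogonal_residual_exists[OF R] by blast
  define y2 where "y2 = (\<lambda>r. y1 r - t * v r)"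
  have orth_v: "(\<Sum>r\<in>R. y2 r * v r) = 0"
    using \<open>(\<Sum>r\<in>R. (y1 r - t * v r) * v r) = 0\<close> by (simp add: y2_def)
  define c where "c = (\<lambda>k. if k = a then t else e k - t * d k)"
  have y2_eq: "y2 r = y r - (\<Sum>k\<in>insert a C. c k * col k r)" for r
  proof -
    have "(\<Sum>k\<in>insert a C. c k * col k r) = t * col a r + (\<Sum>k\<in>C. (e k - t * d k) * col k r)"
      using insert.hyps by (simp add: c_def) (intro sum.cong, auto)
    also have "\<dots> = t * col a r + (\<Sum>k\<in>C. e k * col k r) - t * (\<Sum>k\<in>C. d k * col k r)"
      by (simp add: algebra_simps sum_subtractf sum_distrib_left)
    finally show ?thesis by (simp add: y2_def y1_def v_def algebra_simps)
  qed
  have orth_C: "(\<Sum>r\<in>R. y2 r * col j r) = 0" if "j \<in> C" for j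
  proof -
    have "(\<Sum>r\<in>R. y2 r * col j r) = (\<Sum>r\<in>R. y1 r * col j r) - t * (\<Sum>r\<in>R. v r * col j r)"
      by (simp add: y2_def algebra_simps sum_subtractf sum_distrib_left)
    then show ?thesis using d e that by (simp add: y1_def v_def)
  qed
  have "(\<Sum>r\<in>R. y2 r * col a r) = (\<Sum>r\<in>R. y2 r * v r) + (\<Sum>k\<in>C. d k * (\<Sum>r\<in>R. y2 r * col k r))"
    by (simp add: v_def algebra_simps sum_subtractf sum_distrib_left sum.distrib sum_distrib_right)
      (rule sum.swap)
  also have "\<dots> = 0" using orth_v orth_C by simp
  finally show ?case
    using orth_C by (intro exI[of _ c]) (auto simp: y2_eq[symmetric])
qed

lemma normal_equation_solvable:
  assumes R: "finite R" and C: "finite C" and K: "mat_supp R C K"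
  shows "\<exists>G. mat_supp C R G \<and> mat_mul C (mat_mul R (mat_transpose K) K) G = mat_transpose K"
proof -
  have "\<forall>j. \<exists>c. \<forall>k\<in>C. (\<Sum>r\<in>R. ((if r = j then 1 else 0) - (\<Sum>l\<in>C. c l * K r l)) * K r k) = 0"
    by (intro allI least_squares_exists[OF R C])
  from choice[OF this] obtain c where c: "\<forall>j. \<forall>k\<in>C.
      (\<Sum>r\<in>R. ((if r = j then 1 else 0) - (\<Sum>l\<in>C. c j l * K r l)) * K r k) = 0"
    by blast
  define G where "G = mat_restrict C R (\<lambda>k j. c j k)"
  have entries: "(\<Sum>l\<in>C. (\<Sum>r\<in>R. K r k * K r l) * c j l) = K j k" if "k \<in> C" "j \<in> R" for j k
  proof -
    have "(\<Sum>r\<in>R. (if r = j then 1 else 0) * K r k) = (\<Sum>r\<in>R. (\<Sum>l\<in>C. c j l * K r l) * K r k)"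
      using c that(1) by (simp add: left_diff_distrib sum_subtractf)
    moreover have "(\<Sum>r\<in>R. (if r = j then 1 else 0) * K r k) = (\<Sum>r\<in>R. if r = j then K j k else 0)"
      by (intro sum.cong) auto
    moreover have "\<dots> = K j k"
      using R that(2) by simp
    moreover have "(\<Sum>r\<in>R. (\<Sum>l\<in>C. c j l * K r l) * K r k) = (\<Sum>l\<in>C. (\<Sum>r\<in>R. K r k * K r l) * c j l)"
      by (simp add: sum_distrib_left sum_distrib_right mult_ac) (rule sum.swap)
    ultimately show ?thesis by simp
  qed
  have G: "mat_supp C R G"
    by (simp add: G_def mat_supp_restrict)
  have lhs: "mat_supp C R (mat_mul C (mat_mul R (mat_transpose K) K) G)"
    by (intro mat_supp_mul mat_supp_transpose K G)
  have "mat_mul C (mat_mul R (mat_transpose K) K) G = mat_transpose K"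
    using entries unfolding mat_supp_eq_iff[OF lhs mat_supp_transpose[OF K]]
    by (simp add: G_def mat_mul_def
        mat_transpose_def mat_restrict_def)
  with G show ?thesis by blast
qed

lemma normal_equation_projector:
  assumes "mat_mul C (mat_mul R (mat_transpose K) K) G = mat_transpose K"
  shows "mat_transpose (mat_mul C K G) = mat_mul C K G"
    and "mat_mul R (mat_mul C K G) K = K"
proof -
  define P where "P = mat_mul C K G"
  have KtP: "mat_mul R (mat_transpose K) P = mat_transpose K"
    using assms by (simp add: P_def mat_mul_assoc)
  have "mat_transpose P = mat_mul C (mat_transpose G) (mat_mul R (mat_transpose K) P)"
    by (simp only: KtP) (simp add: P_def mat_transpose_mul)
  also have "\<dots> = mat_mul R (mat_transpose P) P"
    by (simp add: P_def mat_transpose_mul mat_mul_assoc)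
  finally have sym: "mat_transpose P = P"
    by (metis mat_transpose_mul mat_transpose_transpose)
  then show "mat_transpose (mat_mul C K G) = mat_mul C K G"
    by (simp add: P_def)
  have "mat_transpose (mat_mul R P K) = mat_transpose K"
    using KtP sym by (simp add: mat_transpose_mul)
  then show "mat_mul R (mat_mul C K G) K = K"
    by (simp add: P_def mat_transpose_eq_iff)
qed

text \<open>The Penrose equations as identities of total functions; for K supported on R \<times> C they
  are equivalent to the entrywise conditions defining pinv (lemma pinv_eq_The).\<close>

definition penrose_inverse ::
    "'r set \<Rightarrow> 'c set \<Rightarrow> ('r \<Rightarrow> 'c \<Rightarrow> real) \<Rightarrow> ('c \<Rightarrow> 'r \<Rightarrow> real) \<Rightarrow> bool" where
  "penrose_inverse R C K X \<longleftrightarrow> mat_supp C R X \<and>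
     mat_mul R (mat_mul C K X) K = K \<and> mat_mul C (mat_mul R X K) X = X \<and>
     mat_transpose (mat_mul C K X) = mat_mul C K X \<and> mat_transpose (mat_mul R X K) = mat_mul R X K"

lemma penrose_inverse_exists:
  assumes R: "finite R" and C: "finite C" and K: "mat_supp R C K"
  shows "\<exists>X. penrose_inverse R C K X"
proof -
  obtain G where G: "mat_supp C R G"
    and G_eq: "mat_mul C (mat_mul R (mat_transpose K) K) G = mat_transpose K"
    using normal_equation_solvable[OF R C K] by blast
  obtain L where L: "mat_supp R C L"
    and L_eq: "mat_mul R (mat_mul C K (mat_transpose K)) L = K"
    using normal_equation_solvable[OF C R mat_supp_transpose[OF K]] by auto
  define P where "P = mat_mul C K G"
  define Q where "Q = mat_mul R (mat_transpose K) L"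
  have P_sym: "mat_transpose P = P" and PK: "mat_mul R P K = K"
    using normal_equation_projector[OF G_eq] by (simp_all add: P_def)
  have Q_sym: "mat_transpose Q = Q" and QKt: "mat_mul C Q (mat_transpose K) = mat_transpose K"
    using normal_equation_projector[of R C "mat_transpose K" L] L_eq by (simp_all add: Q_def)
  have KQ: "mat_mul C K Q = K"
    using QKt Q_sym by (metis mat_transpose_mul mat_transpose_transpose)
  have Q_alt: "Q = mat_mul R (mat_transpose L) K"
    using Q_sym by (metis Q_def mat_transpose_mul mat_transpose_transpose)
  have "mat_mul C (mat_mul R (mat_transpose L) K) Q = mat_mul R (mat_transpose L) K"
    by (simp add: mat_mul_assoc KQ)
  then have QQ: "mat_mul C Q Q = Q"
    by (simp flip: Q_alt)
  define X where "X = mat_mul C Q G"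
  have KX: "mat_mul C K X = P"
    by (simp add: X_def P_def KQ flip: mat_mul_assoc)
  have XK: "mat_mul R X K = Q"
  proof -
    have "mat_mul R X K = mat_mul R (mat_transpose L) (mat_mul R P K)"
      unfolding X_def by (subst Q_alt) (simp add: P_def mat_mul_assoc)
    then show ?thesis by (simp add: PK flip: Q_alt)
  qed
  have "mat_supp C R X"
    unfolding X_def Q_def
    by (intro mat_supp_mul mat_supp_transpose K L G)
  moreover have "mat_mul C (mat_mul R X K) X = X"
    by (simp only: XK) (simp add: X_def QQ flip: mat_mul_assoc)
  ultimately have "penrose_inverse R C K X"
    unfolding penrose_inverse_def using KX XK P_sym Q_sym PK by simp
  then show ?thesis by blast
qed

lemma penrose_inverse_transpose:
  assumes "penrose_inverse R C K X"
  shows "penrose_inverse C R (mat_transpose K) (mat_transpose X)"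
proof -
  have "mat_mul C (mat_mul R (mat_transpose K) (mat_transpose X)) (mat_transpose K)
      = mat_transpose (mat_mul R (mat_mul C K X) K)"
    and "mat_mul R (mat_mul C (mat_transpose X) (mat_transpose K)) (mat_transpose X)
      = mat_transpose (mat_mul C (mat_mul R X K) X)"
    by (simp_all add: mat_transpose_mul mat_mul_assoc)
  moreover have "mat_mul R (mat_transpose K) (mat_transpose X) = mat_transpose (mat_mul R X K)"
    and "mat_mul C (mat_transpose X) (mat_transpose K) = mat_transpose (mat_mul C K X)"
    by (simp_all add: mat_transpose_mul)
  ultimately show ?thesis
    using assms unfolding penrose_inverse_def by (simp add: mat_supp_transpose)
qed

lemma penrose_inverse_left_unique:
  assumes X: "penrose_inverse R C K X" and Y: "penrose_inverse R C K Y"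
  shows "mat_mul C K X = mat_mul C K Y"
proof -
  have "mat_mul C K X = mat_mul R (mat_mul C K Y) (mat_mul C K X)"
    using Y unfolding penrose_inverse_def by (metis mat_mul_assoc)
  also have "\<dots> = mat_transpose (mat_mul R (mat_mul C K X) (mat_mul C K Y))"
    using X Y unfolding penrose_inverse_def by (simp add: mat_transpose_mul)
  also have "\<dots> = mat_mul C K Y"
    using X Y unfolding penrose_inverse_def by (metis mat_mul_assoc)
  finally show ?thesis .
qed

lemma penrose_inverse_unique:
  assumes X: "penrose_inverse R C K X" and Y: "penrose_inverse R C K Y"
  shows "X = Y"
proof -
  have "mat_mul R (mat_transpose K) (mat_transpose X) = mat_mul R (mat_transpose K) (mat_transpose Y)"
    using X Y by (intro penrose_inverse_left_unique penrose_inverse_transpose)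
  then have XK: "mat_mul R X K = mat_mul R Y K"
    by (metis mat_transpose_mul mat_transpose_eq_iff)
  have "X = mat_mul R X (mat_mul C K X)"
    using X unfolding penrose_inverse_def by (metis mat_mul_assoc)
  also have "\<dots> = mat_mul C (mat_mul R Y K) Y"
    using penrose_inverse_left_unique[OF X Y] XK by (metis mat_mul_assoc)
  also have "\<dots> = Y"
    using Y unfolding penrose_inverse_def by blast
  finally show ?thesis .
qed

lemma pinv_restrict: "pinv R C K = pinv R C (mat_restrict R C K)"
  unfolding pinv_def mat_mul_def mat_restrict_def by (simp cong: sum.cong)

lemma pinv_eq_The:
  assumes K: "mat_supp R C K"
  shows "pinv R C K = (THE X. penrose_inverse R C K X)"
proof -
  have "penrose_inverse R C K X \<longleftrightarrow> mat_supp C R X \<and>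
     (\<forall>i\<in>R. \<forall>j\<in>C. mat_mul R (mat_mul C K X) K i j = K i j) \<and>
     (\<forall>i\<in>C. \<forall>j\<in>R. mat_mul C (mat_mul R X K) X i j = X i j) \<and>
     (\<forall>i\<in>R. \<forall>j\<in>R. mat_mul C K X i j = mat_mul C K X j i) \<and>
     (\<forall>i\<in>C. \<forall>j\<in>C. mat_mul R X K i j = mat_mul R X K j i)" for X
  proof (cases "mat_supp C R X")
    case X: True
    have KX: "mat_supp R R (mat_mul C K X)" and XK: "mat_supp C C (mat_mul R X K)"
      using K X by (simp_all add: mat_supp_mul)
    have "mat_supp R C (mat_mul R (mat_mul C K X) K)" "mat_supp C R (mat_mul C (mat_mul R X K) X)"
      using K X KX XK by (simp_all add: mat_supp_mul)
    then show ?thesis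
      using X unfolding penrose_inverse_def
      by (simp add: mat_supp_eq_iff K mat_supp_eq_iff[OF mat_supp_transpose[OF KX] KX]
          mat_supp_eq_iff[OF mat_supp_transpose[OF XK] XK]) blast
  qed (simp add: penrose_inverse_def)
  then show ?thesis
    unfolding pinv_def mat_supp_def by simp
qed

lemma penrose_inverse_pinv:
  assumes "finite R" "finite C"
  shows "penrose_inverse R C (mat_restrict R C K) (pinv R C K)"
proof -
  obtain X where X: "penrose_inverse R C (mat_restrict R C K) X"
    using penrose_inverse_exists[OF assms mat_supp_restrict] by blast
  show ?thesis
    unfolding pinv_restrict[of R C K] pinv_eq_The[OF mat_supp_restrict]
    using theI[where P = "penrose_inverse R C (mat_restrict R C K)", OF X
        penrose_inverse_unique[OF _ X]] .
qed

lemma pinv_normal_equation: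
  assumes "finite R" "finite C"
  shows "mat_mul R (mat_transpose (mat_restrict R C K)) (mat_mul C (mat_restrict R C K) (pinv R C K))
    = mat_transpose (mat_restrict R C K)"
proof -
  let ?K = "mat_restrict R C K" and ?X = "pinv R C K"
  have X: "penrose_inverse R C ?K ?X"
    using assms by (rule penrose_inverse_pinv)
  then have "mat_mul R (mat_transpose ?K) (mat_mul C ?K ?X) = mat_transpose (mat_mul R (mat_mul C ?K ?X) ?K)"
    unfolding penrose_inverse_def by (metis mat_transpose_mul)
  then show ?thesis
    using X unfolding penrose_inverse_def by simp
qed

lemma sum_mult_sum_swap:
  fixes a :: "'i \<Rightarrow> real"
  shows "(\<Sum>i\<in>I. a i * (\<Sum>j\<in>J. b i j * c j)) = (\<Sum>j\<in>J. (\<Sum>i\<in>I. a i * b i j) * c j)"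
  unfolding sum_distrib_left sum_distrib_right mult.assoc by (rule sum.swap)

lemma pinv_residual_orthogonal:
  assumes R: "finite R" and C: "finite C" and k: "k \<in> C"
  shows "(\<Sum>r\<in>R. (x r - (\<Sum>i\<in>C. K r i * (\<Sum>s\<in>R. pinv R C K i s * x s))) * K r k) = 0"
proof -
  have normal: "(\<Sum>r\<in>R. K r k * (\<Sum>i\<in>C. K r i * pinv R C K i s)) = K s k" if "s \<in> R" for s
    using fun_cong[OF fun_cong[OF pinv_normal_equation[OF R C, of K]], of k s] k that
    by (simp add: mat_mul_def mat_restrict_def cong: sum.cong)
  have "(\<Sum>r\<in>R. (\<Sum>i\<in>C. K r i * (\<Sum>s\<in>R. pinv R C K i s * x s)) * K r k)
      = (\<Sum>r\<in>R. K r k * (\<Sum>s\<in>R. (\<Sum>i\<in>C. K r i * pinv R C K i s) * x s))"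
    by (rule sum.cong[OF refl]) (simp only: sum_mult_sum_swap, rule mult.commute)
  also have "\<dots> = (\<Sum>s\<in>R. K s k * x s)"
    by (subst sum_mult_sum_swap) (simp add: normal)
  finally have "(\<Sum>r\<in>R. (\<Sum>i\<in>C. K r i * (\<Sum>s\<in>R. pinv R C K i s * x s)) * K r k)
      = (\<Sum>s\<in>R. K s k * x s)" .
  then show ?thesis
    unfolding left_diff_distrib sum_subtractf by (simp add: mult.commute)
qed

section \<open>Spans of test-indexed vectors\<close>

lemma sum_fun_apply: "sum g A x = (\<Sum>a\<in>A. g a x)"
  by (induction A rule: infinite_finite_induct) auto

lemma fspan_sum:
  fixes q :: "'i \<Rightarrow> 't \<Rightarrow> real"
  assumes "finite T"
  shows "(\<lambda>r. \<Sum>\<tau>\<in>T. c \<tau> * q \<tau> r) \<in> fspan (q ` T)"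
proof -
  interpret V: vector_space "fscale :: real \<Rightarrow> ('t \<Rightarrow> real) \<Rightarrow> ('t \<Rightarrow> real)"
    by (rule vector_space_fscale)
  have "(\<Sum>\<tau>\<in>T. fscale (c \<tau>) (q \<tau>)) \<in> fspan (q ` T)"
    by (intro V.span_sum V.span_scale V.span_base) auto
  moreover have "(\<Sum>\<tau>\<in>T. fscale (c \<tau>) (q \<tau>)) = (\<lambda>r. \<Sum>\<tau>\<in>T. c \<tau> * q \<tau> r)"
    by (simp add: fun_eq_iff sum_fun_apply fscale_def)
  ultimately show ?thesis
    by simp
qed

lemma fspan_orthogonal:
  fixes v :: "'t \<Rightarrow> real"
  assumes "v \<in> fspan S" "\<forall>w\<in>S. (\<Sum>r\<in>R. d r * w r) = 0"
  shows "(\<Sum>r\<in>R. d r * v r) = 0"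
proof -
  interpret V: vector_space "fscale :: real \<Rightarrow> ('t \<Rightarrow> real) \<Rightarrow> ('t \<Rightarrow> real)"
    by (rule vector_space_fscale)
  have "V.subspace {v. (\<Sum>r\<in>R. d r * v r) = 0}"
    by (auto simp: V.subspace_def fscale_def algebra_simps sum.distrib sum_distrib_left[symmetric])
  then show ?thesis
    using V.span_induct[OF assms(1), where P="\<lambda>v. (\<Sum>r\<in>R. d r * v r) = 0"] assms(2) by auto
qed

lemma fspan_vanishes_outside:
  fixes v :: "'t \<Rightarrow> real"
  assumes "v \<in> fspan S" "\<forall>w\<in>S. \<forall>r. r \<notin> R \<longrightarrow> w r = 0" "r \<notin> R"
  shows "v r = 0"
proof -
  interpret V: vector_space "fscale :: real \<Rightarrow> ('t \<Rightarrow> real) \<Rightarrow> ('t \<Rightarrow> real)"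
    by (rule vector_space_fscale)
  have "V.subspace {v. \<forall>r. r \<notin> R \<longrightarrow> v r = 0}"
    by (auto simp: V.subspace_def fscale_def)
  then show ?thesis
    using V.span_induct[OF assms(1), where P="\<lambda>v. \<forall>r. r \<notin> R \<longrightarrow> v r = 0"] assms(2,3) by auto
qed

lemma ex1_span_representer:
  fixes q :: "'i \<Rightarrow> 't \<Rightarrow> real"
  assumes R: "finite R" and T: "finite T"
    and q: "\<forall>\<tau>\<in>T. \<forall>r. r \<notin> R \<longrightarrow> q \<tau> r = 0"
    and m0: "\<forall>\<tau>\<in>T. y \<tau> = (\<Sum>r\<in>R. m0 r * q \<tau> r)"
  shows "\<exists>!m. m \<in> fspan (q ` T) \<and> (\<forall>\<tau>\<in>T. y \<tau> = (\<Sum>r\<in>R. m r * q \<tau> r))"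
proof -
  interpret V: vector_space "fscale :: real \<Rightarrow> ('t \<Rightarrow> real) \<Rightarrow> ('t \<Rightarrow> real)"
    by (rule vector_space_fscale)
  \<comment> \<open>The representer is the orthogonal projection of m0 onto the span.\<close>
  obtain c where c: "\<forall>\<sigma>\<in>T. (\<Sum>r\<in>R. (m0 r - (\<Sum>\<tau>\<in>T. c \<tau> * q \<tau> r)) * q \<sigma> r) = 0"
    using least_squares_exists[OF R T] by blast
  define m where "m = (\<lambda>r. \<Sum>\<tau>\<in>T. c \<tau> * q \<tau> r)"
  have "m \<in> fspan (q ` T)"
    unfolding m_def using T by (rule fspan_sum)
  moreover have "y \<sigma> = (\<Sum>r\<in>R. m r * q \<sigma> r)" if "\<sigma> \<in> T" for \<sigma>
    using m0 c that by (simp add: m_def left_diff_distrib sum_subtractf)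
  moreover have "m1 = m2"
    if m1: "m1 \<in> fspan (q ` T)" "\<forall>\<tau>\<in>T. y \<tau> = (\<Sum>r\<in>R. m1 r * q \<tau> r)"
      and m2: "m2 \<in> fspan (q ` T)" "\<forall>\<tau>\<in>T. y \<tau> = (\<Sum>r\<in>R. m2 r * q \<tau> r)" for m1 m2
  proof
    fix r
    define d where "d = m1 - m2"
    have d: "d \<in> fspan (q ` T)"
      unfolding d_def using m1 m2 by (intro V.span_diff) auto
    have "\<forall>w\<in>q ` T. (\<Sum>r\<in>R. d r * w r) = 0"
      using m1 m2 by (auto simp: d_def left_diff_distrib sum_subtractf)
    then have "(\<Sum>r\<in>R. d r * d r) = 0"
      using d by (rule fspan_orthogonal[rotated])
    then have "d r = 0"
      using R q fspan_vanishes_outside[OF d, of R r] by (cases "r \<in> R") (auto simp: sum_nonneg_eq_0_iff)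
    then show "m1 r = m2 r"
      by (simp add: d_def)
  qed
  ultimately show ?thesis by blast
qed

lemma finite_lists_length: "finite {xs :: 'a::finite list. length xs = n}"
  using finite_lists_length_eq[of "UNIV :: 'a set" n] by simp

lemma m_vec_spec:
  fixes f :: "('ob::finite, 'a::finite) model"
  assumes cts: "core_test_sets H f U" and h: "h \<in> {1..H}" and t: "is_test H h t"
  shows "m_vec f U h t \<in> fspan {pred_state f U h \<tau> | \<tau>. length \<tau> = h - 1}"
    and "length \<tau> = h - 1 \<Longrightarrow> test_prob f h \<tau> t = (\<Sum>u\<in>U h. m_vec f U h t u * pred_state f U h \<tau> u)"
proof -
  let ?T = "{\<tau> :: ('ob, 'a) hist. length \<tau> = h - 1}"
  have fin: "finite (U h)"
    and "\<exists>m. \<forall>\<tau>. length \<tau> = h - 1 \<longrightarrow> test_prob f h \<tau> t = (\<Sum>u\<in>U h. m u * test_prob f h \<tau> u)"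
    using cts h t unfolding core_test_sets_def by blast+
  then obtain m0 where "\<forall>\<tau>\<in>?T. test_prob f h \<tau> t = (\<Sum>u\<in>U h. m0 u * pred_state f U h \<tau> u)"
    by (auto simp: pred_state_def cong: sum.cong)
  then have "\<exists>!m. m \<in> fspan (pred_state f U h ` ?T) \<and>
      (\<forall>\<tau>\<in>?T. test_prob f h \<tau> t = (\<Sum>u\<in>U h. m u * pred_state f U h \<tau> u))"
    using fin finite_lists_length by (intro ex1_span_representer) (auto simp: pred_state_def)
  moreover have "{pred_state f U h \<tau> | \<tau>. length \<tau> = h - 1} = pred_state f U h ` ?T"
    by auto
  ultimately have "\<exists>!m. m \<in> fspan {pred_state f U h \<tau> | \<tau>. length \<tau> = h - 1} \<and>
      (\<forall>\<tau>. length \<tau> = h - 1 \<longrightarrow> test_prob f h \<tau> t = (\<Sum>u\<in>U h. m u * pred_state f U h \<tau> u))"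
    by simp
  from theI'[OF this] show "m_vec f U h t \<in> fspan {pred_state f U h \<tau> | \<tau>. length \<tau> = h - 1}"
    and "length \<tau> = h - 1 \<Longrightarrow> test_prob f h \<tau> t = (\<Sum>u\<in>U h. m_vec f U h t u * pred_state f U h \<tau> u)"
    unfolding m_vec_def by auto
qed

section \<open>Trajectory probabilities\<close>

lemma valid_model_nonneg:
  "valid_model H f \<Longrightarrow> 1 \<le> h \<Longrightarrow> h \<le> H \<Longrightarrow> length \<tau> = h - 1 \<Longrightarrow> 0 \<le> f h \<tau> ob"
  unfolding valid_model_def by blast

lemma valid_model_sum:
  "valid_model H f \<Longrightarrow> 1 \<le> h \<Longrightarrow> h \<le> H \<Longrightarrow> length \<tau> = h - 1 \<Longrightarrow> (\<Sum>ob\<in>UNIV. f h \<tau> ob) = 1"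
  unfolding valid_model_def by blast

lemma valid_policy_nonneg:
  "valid_policy H \<pi> \<Longrightarrow> 1 \<le> h \<Longrightarrow> h \<le> H \<Longrightarrow> length \<tau> = h - 1 \<Longrightarrow> 0 \<le> \<pi> h \<tau> ob a"
  unfolding valid_policy_def by blast

lemma valid_policy_sum:
  "valid_policy H \<pi> \<Longrightarrow> 1 \<le> h \<Longrightarrow> h \<le> H \<Longrightarrow> length \<tau> = h - 1 \<Longrightarrow> (\<Sum>a\<in>UNIV. \<pi> h \<tau> ob a) = 1"
  unfolding valid_policy_def by blast

lemma hist_prob_nonneg:
  assumes "valid_model H f" "length \<tau> \<le> H"
  shows "0 \<le> hist_prob f \<tau>"
  unfolding hist_prob_def using assms by (auto intro!: prod_nonneg valid_model_nonneg)

lemma hist_prob_snoc: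
  assumes "length \<tau> = h - 1" "1 \<le> h"
  shows "hist_prob f (\<tau> @ [(ob, a)]) = hist_prob f \<tau> * f h \<tau> ob"
proof -
  have h: "h = Suc (length \<tau>)"
    using assms by simp
  have "hist_prob f (\<tau> @ [(ob, a)])
      = (\<Prod>k<length \<tau>. f (Suc k) (take k (\<tau> @ [(ob, a)])) (fst ((\<tau> @ [(ob, a)]) ! k))) * f h \<tau> ob"
    unfolding hist_prob_def h by simp
  also have "(\<Prod>k<length \<tau>. f (Suc k) (take k (\<tau> @ [(ob, a)])) (fst ((\<tau> @ [(ob, a)]) ! k)))
      = hist_prob f \<tau>"
    unfolding hist_prob_def by (intro prod.cong) (auto simp: nth_append)
  finally show ?thesis .
qed

lemma test_prob_nonneg:
  assumes "valid_model H f" "1 \<le> h" "length \<tau> = h - 1" "is_test H h t"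
  shows "0 \<le> test_prob f h \<tau> t"
proof -
  have "0 \<le> f (h + k) (\<tau> @ zip (take k (fst t)) (take k (snd t))) (fst t ! k)" if "k < length (fst t)" for k
    using assms that by (intro valid_model_nonneg[OF assms(1)]) (auto simp: is_test_def)
  then show ?thesis
    unfolding test_prob_def by (auto intro!: prod_nonneg)
qed

lemma test_prob_Cons:
  assumes vm: "valid_model H f" and h: "1 \<le> h" "h \<le> H" and \<tau>: "length \<tau> = h - 1"
  shows "test_prob f h \<tau> (ob # os, a # as) = f h \<tau> ob * test_prob f (Suc h) (\<tau> @ [(ob, a)]) (os, as)"
proof -
  have f: "0 \<le> f h \<tau> ob"
    using vm h \<tau> by (rule valid_model_nonneg)
  have "0 \<le> hist_prob f \<tau>"
    using vm \<tau> h by (intro hist_prob_nonneg) auto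
  \<comment> \<open>Reachability of the extended history fails exactly when one of the two factors vanishes.\<close>
  then have "hist_prob f (\<tau> @ [(ob, a)]) > 0 \<longleftrightarrow> hist_prob f \<tau> > 0 \<and> f h \<tau> ob \<noteq> 0"
    using f hist_prob_snoc[OF \<tau> h(1)] by (auto simp: zero_less_mult_iff)
  then show ?thesis
    unfolding test_prob_def by (simp add: prod.lessThan_Suc_shift del: prod.lessThan_Suc)
qed

definition obs_prob :: "('ob, 'a) model \<Rightarrow> nat \<Rightarrow> ('ob, 'a) hist \<Rightarrow> ('ob, 'a) hist \<Rightarrow> real" where
  "obs_prob f h \<tau> seg = (\<Prod>k<length seg. f (h + k) (\<tau> @ take k seg) (fst (seg ! k)))"

lemma obs_prob_Nil [simp]: "obs_prob f h \<tau> [] = 1"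
  by (simp add: obs_prob_def)

lemma obs_prob_Cons: "obs_prob f h \<tau> ((ob, a) # seg) = f h \<tau> ob * obs_prob f (Suc h) (\<tau> @ [(ob, a)]) seg"
  unfolding obs_prob_def by (simp add: prod.lessThan_Suc_shift del: prod.lessThan_Suc)

lemma obs_prob_nonneg:
  assumes "valid_model H f" "1 \<le> h" "h + length seg \<le> Suc H" "length \<tau> = h - 1"
  shows "0 \<le> obs_prob f h \<tau> seg"
  unfolding obs_prob_def using assms by (auto intro!: prod_nonneg valid_model_nonneg[OF assms(1)])

lemma pol_prob_Cons:
  "pol_prob \<pi> h \<tau> ((ob, a) # seg) = \<pi> h \<tau> ob a * pol_prob \<pi> (Suc h) (\<tau> @ [(ob, a)]) seg"
  unfolding pol_prob_def by (simp add: prod.lessThan_Suc_shift del: prod.lessThan_Suc)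

lemma pol_prob_nonneg:
  assumes "valid_policy H \<pi>" "1 \<le> h" "h + length seg \<le> Suc H" "length \<tau> = h - 1"
  shows "0 \<le> pol_prob \<pi> h \<tau> seg"
  unfolding pol_prob_def using assms by (auto intro!: prod_nonneg valid_policy_nonneg[OF assms(1)])

lemma sum_lists_length_Suc:
  fixes g :: "'x::finite list \<Rightarrow> real"
  shows "(\<Sum>l\<in>{l. length l = Suc n}. g l) = (\<Sum>x\<in>UNIV. \<Sum>l\<in>{l. length l = n}. g (x # l))"
proof -
  have lists: "{l. length l = Suc n} = (\<lambda>(x, l). x # l) ` (UNIV \<times> {l. length l = n})"
    by (auto simp: image_iff length_Suc_conv)
  have inj: "inj_on (\<lambda>(x, l). x # l) (UNIV \<times> {l :: 'x list. length l = n})"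
    by (auto simp: inj_on_def)
  show ?thesis
    unfolding lists sum.reindex[OF inj] by (simp add: sum.cartesian_product split_def)
qed

lemma sum_UNIV_pair:
  fixes g :: "'x::finite \<times> 'y::finite \<Rightarrow> real"
  shows "(\<Sum>p\<in>UNIV. g p) = (\<Sum>x\<in>UNIV. \<Sum>y\<in>UNIV. g (x, y))"
  by (simp add: sum.cartesian_product flip: UNIV_Times_UNIV)

lemma obs_pol_expectation_le:
  fixes f :: "('ob::finite, 'a::finite) model"
  assumes vm: "valid_model H f" and vp: "valid_policy H \<pi>"
  shows "1 \<le> h \<Longrightarrow> h + n \<le> Suc H \<Longrightarrow> length \<tau> = h - 1 \<Longrightarrow> length \<tau>' = h - 1 \<Longrightarrow>
    (\<And>\<sigma>. length \<sigma> = h - 1 + n \<Longrightarrow> g \<sigma> \<le> B) \<Longrightarrow>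
    (\<Sum>seg\<in>{seg. length seg = n}. obs_prob f h \<tau>' seg * pol_prob \<pi> h \<tau> seg * g (\<tau>' @ seg)) \<le> B"
proof (induction n arbitrary: h \<tau> \<tau>')
  case 0
  then show ?case by (simp add: pol_prob_def)
next
  case (Suc n)
  define E where "E = (\<lambda>ob a. \<Sum>seg\<in>{seg. length seg = n}. obs_prob f (Suc h) (\<tau>' @ [(ob, a)]) seg *
       pol_prob \<pi> (Suc h) (\<tau> @ [(ob, a)]) seg * g ((\<tau>' @ [(ob, a)]) @ seg))"
  have E: "E ob a \<le> B" for ob a
    unfolding E_def using Suc.prems by (intro Suc.IH) auto
  have h: "1 \<le> h" "h \<le> H"
    using Suc.prems by auto
  have f: "0 \<le> f h \<tau>' ob" "(\<Sum>ob\<in>UNIV. f h \<tau>' ob) = 1" for ob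
    using vm h Suc.prems(4) by (auto intro: valid_model_nonneg valid_model_sum)
  have \<pi>: "0 \<le> \<pi> h \<tau> ob a" "(\<Sum>a\<in>UNIV. \<pi> h \<tau> ob a) = 1" for ob a
    using vp h Suc.prems(3) by (auto intro: valid_policy_nonneg valid_policy_sum)
  have "(\<Sum>seg\<in>{seg. length seg = Suc n}. obs_prob f h \<tau>' seg * pol_prob \<pi> h \<tau> seg * g (\<tau>' @ seg))
     = (\<Sum>ob\<in>UNIV. \<Sum>a\<in>UNIV. f h \<tau>' ob * \<pi> h \<tau> ob a * E ob a)"
    unfolding sum_lists_length_Suc sum_UNIV_pair E_def
    by (simp add: obs_prob_Cons pol_prob_Cons sum_distrib_left mult_ac)
  also have "\<dots> \<le> (\<Sum>ob\<in>UNIV. \<Sum>a\<in>UNIV. f h \<tau>' ob * \<pi> h \<tau> ob a * B)"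
    using E f \<pi> by (intro sum_mono mult_left_mono) auto
  also have "\<dots> = B"
    using f \<pi> by (simp flip: sum_distrib_left sum_distrib_right)
  finally show ?case .
qed

lemma obs_seq_prob_sum_eq_1:
  fixes f :: "('ob::finite, 'a) model"
  assumes vm: "valid_model H f"
  shows "1 \<le> h \<Longrightarrow> h + n \<le> Suc H \<Longrightarrow> length \<tau> = h - 1 \<Longrightarrow> n \<le> Suc (length as) \<Longrightarrow>
    (\<Sum>os\<in>{os. length os = n}. \<Prod>k<n. f (h + k) (\<tau> @ zip (take k os) (take k as)) (os ! k)) = 1"
proof (induction n arbitrary: h \<tau> as)
  case 0
  then show ?case by simp
next
  case (Suc n)
  have f_sum: "(\<Sum>ob\<in>UNIV. f h \<tau> ob) = 1"
    using Suc.prems by (intro valid_model_sum[OF vm]) auto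
  show ?case
  proof (cases as)
    case Nil
    then show ?thesis
      using Suc.prems f_sum by (simp add: sum_lists_length_Suc)
  next
    case (Cons a as')
    have "(\<Sum>os\<in>{os. length os = n}. \<Prod>k<n. f (Suc h + k) ((\<tau> @ [(ob, a)]) @ zip (take k os) (take k as')) (os ! k)) = 1"
      for ob
      using Suc.prems Cons by (intro Suc.IH) auto
    then show ?thesis
      using f_sum
      by (simp add: Cons sum_lists_length_Suc prod.lessThan_Suc_shift
          flip: sum_distrib_left del: prod.lessThan_Suc)
  qed
qed

lemma test_prob_sum_obs_le_1:
  fixes f :: "('ob::finite, 'a) model"
  assumes "valid_model H f" "1 \<le> h" "h + Suc (length as) \<le> Suc H" "length \<tau> = h - 1"
  shows "(\<Sum>os\<in>{os. length os = Suc (length as)}. test_prob f h \<tau> (os, as)) \<le> 1"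
proof (cases "hist_prob f \<tau> > 0")
  case True
  then have "(\<Sum>os\<in>{os. length os = Suc (length as)}. test_prob f h \<tau> (os, as))
     = (\<Sum>os\<in>{os. length os = Suc (length as)}.
          \<Prod>k<Suc (length as). f (h + k) (\<tau> @ zip (take k os) (take k as)) (os ! k))"
    by (intro sum.cong) (auto simp: test_prob_def)
  also have "\<dots> = 1"
    using assms by (intro obs_seq_prob_sum_eq_1) auto
  finally show ?thesis by simp
qed (simp add: test_prob_def)

lemma l1norm_pred_state_le:
  fixes f :: "('ob::finite, 'a::finite) model"
  assumes vm: "valid_model H f" and cts: "core_test_sets H f U"
    and h: "1 \<le> h" "h \<le> H" and \<tau>: "length \<tau> = h - 1"
  shows "l1norm (U h) (pred_state f U h \<tau>) \<le> card (snd ` U h)"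
proof -
  have fin: "finite (U h)" and tests: "\<forall>u\<in>U h. is_test H h u"
    using cts h unfolding core_test_sets_def by auto
  have "l1norm (U h) (pred_state f U h \<tau>) = (\<Sum>u\<in>U h. test_prob f h \<tau> u)"
    unfolding l1norm_def pred_state_def
    using tests test_prob_nonneg[OF vm h(1) \<tau>] by (intro sum.cong) auto
  also have "\<dots> = (\<Sum>as\<in>snd ` U h. \<Sum>u\<in>{u\<in>U h. snd u = as}. test_prob f h \<tau> u)"
    by (rule sum.image_gen[OF fin])
  also have "\<dots> \<le> (\<Sum>as\<in>snd ` U h. 1)"
  proof (rule sum_mono)
    fix as
    assume "as \<in> snd ` U h"
    then have as_len: "h + Suc (length as) \<le> Suc H"
      using tests by (auto simp: is_test_def)
    have inj: "inj_on fst {u\<in>U h. snd u = as}"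
      by (auto simp: inj_on_def prod_eq_iff)
    have "(\<Sum>u\<in>{u\<in>U h. snd u = as}. test_prob f h \<tau> u)
        = (\<Sum>os\<in>fst ` {u\<in>U h. snd u = as}. test_prob f h \<tau> (os, as))"
      by (subst sum.reindex[OF inj]) (auto intro!: sum.cong)
    also have "\<dots> \<le> (\<Sum>os\<in>{os. length os = Suc (length as)}. test_prob f h \<tau> (os, as))"
      using tests as_len
      by (intro sum_mono2 finite_lists_length test_prob_nonneg[OF vm h(1) \<tau>])
        (auto simp: is_test_def)
    also have "\<dots> \<le> 1"
      using vm h(1) as_len \<tau> by (rule test_prob_sum_obs_le_1)
    finally show "(\<Sum>u\<in>{u\<in>U h. snd u = as}. test_prob f h \<tau> u) \<le> 1" .
  qed
  finally show ?thesis by simp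
qed

lemma card_action_seqs_le_UA_card: "1 \<le> h \<Longrightarrow> h \<le> H \<Longrightarrow> card (snd ` U h) \<le> UA_card H U"
  unfolding UA_card_def by (intro Max_ge) auto

section \<open>The operators M\<close>

lemma M_apply_pred_state:
  fixes f :: "('ob::finite, 'a::finite) model"
  assumes vm: "valid_model H f" and cts: "core_test_sets H f U"
    and h: "1 \<le> h" "Suc h \<le> H" and \<tau>: "length \<tau> = h - 1"
  shows "M_apply f U ob a h (pred_state f U h \<tau>) = (\<lambda>u. f h \<tau> ob * pred_state f U (Suc h) (\<tau> @ [(ob, a)]) u)"
proof
  fix u
  show "M_apply f U ob a h (pred_state f U h \<tau>) u = f h \<tau> ob * pred_state f U (Suc h) (\<tau> @ [(ob, a)]) u"
  proof (cases "u \<in> U (Suc h)")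
    case True
    then have "is_test H (Suc h) u"
      using cts h unfolding core_test_sets_def by auto
    then have "is_test H h (ob # fst u, a # snd u)"
      by (auto simp: is_test_def)
    then have "M_apply f U ob a h (pred_state f U h \<tau>) u = test_prob f h \<tau> (ob # fst u, a # snd u)"
      using m_vec_spec(2)[OF cts _ _ \<tau>] h True by (simp add: M_apply_def)
    also have "\<dots> = f h \<tau> ob * test_prob f (Suc h) (\<tau> @ [(ob, a)]) u"
      using test_prob_Cons[OF vm h(1) _ \<tau>] h by simp
    finally show ?thesis
      using True by (simp add: pred_state_def)
  qed (simp add: M_apply_def pred_state_def)
qed

lemma M_apply_sum:
  "M_apply f U ob a h (\<lambda>v. \<Sum>i\<in>I. z i * w i v) = (\<lambda>u. \<Sum>i\<in>I. z i * M_apply f U ob a h (w i) u)"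
proof
  fix u
  have "(\<Sum>v\<in>U h. m_vec f U h (ob # fst u, a # snd u) v * (\<Sum>i\<in>I. z i * w i v))
      = (\<Sum>i\<in>I. z i * (\<Sum>v\<in>U h. m_vec f U h (ob # fst u, a # snd u) v * w i v))"
    by (simp add: sum_distrib_left sum_distrib_right mult_ac) (rule sum.swap)
  then show "M_apply f U ob a h (\<lambda>v. \<Sum>i\<in>I. z i * w i v) u = (\<Sum>i\<in>I. z i * M_apply f U ob a h (w i) u)"
    by (simp add: M_apply_def)
qed

lemma M_prod_sum:
  "M_prod f U h seg (\<lambda>v. \<Sum>i\<in>I. z i * w i v) = (\<lambda>u. \<Sum>i\<in>I. z i * M_prod f U h seg (w i) u)"
proof (induction seg arbitrary: h w)
  case (Cons p seg)
  then show ?case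
    by (cases p) (simp add: M_apply_sum)
qed simp

lemma M_prod_scale: "M_prod f U h seg (\<lambda>v. c * w v) = (\<lambda>u. c * M_prod f U h seg w u)"
  using M_prod_sum[of f U h seg "\<lambda>_. c" "\<lambda>_. w" "{()}"] by simp

lemma M_prod_pred_state:
  fixes f :: "('ob::finite, 'a::finite) model"
  assumes vm: "valid_model H f" and cts: "core_test_sets H f U"
  shows "1 \<le> h \<Longrightarrow> h + length seg \<le> H \<Longrightarrow> length \<tau> = h - 1 \<Longrightarrow>
    M_prod f U h seg (pred_state f U h \<tau>) = (\<lambda>u. obs_prob f h \<tau> seg * pred_state f U (h + length seg) (\<tau> @ seg) u)"
proof (induction seg arbitrary: h \<tau>)
  case (Cons p seg)
  obtain ob a where p: "p = (ob, a)"
    by (cases p)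
  have "M_prod f U h (p # seg) (pred_state f U h \<tau>)
      = (\<lambda>u. f h \<tau> ob * M_prod f U (Suc h) seg (pred_state f U (Suc h) (\<tau> @ [(ob, a)])) u)"
    using M_apply_pred_state[OF vm cts Cons.prems(1) _ Cons.prems(3), of ob a] Cons.prems(2)
    by (simp add: p M_prod_scale)
  then show ?case
    using Cons.IH[of "Suc h" "\<tau> @ [(ob, a)]"] Cons.prems by (simp add: p obs_prob_Cons mult.assoc)
qed simp

lemma l1norm_sum_le: "l1norm V (\<lambda>u. \<Sum>i\<in>I. z i * g i u) \<le> (\<Sum>i\<in>I. \<bar>z i\<bar> * l1norm V (g i))"
proof -
  have "l1norm V (\<lambda>u. \<Sum>i\<in>I. z i * g i u) \<le> (\<Sum>u\<in>V. \<Sum>i\<in>I. \<bar>z i\<bar> * \<bar>g i u\<bar>)"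
    unfolding l1norm_def by (rule sum_mono, rule order_trans[OF sum_abs]) (simp add: abs_mult)
  also have "\<dots> = (\<Sum>i\<in>I. \<bar>z i\<bar> * l1norm V (g i))"
    unfolding l1norm_def sum_distrib_left by (rule sum.swap)
  finally show ?thesis .
qed

lemma M_prod_mass_sum_le:
  assumes "\<forall>seg\<in>S. 0 \<le> w seg"
  shows "(\<Sum>seg\<in>S. l1norm V (M_prod f U h seg (\<lambda>v. \<Sum>i\<in>I. z i * y i v)) * w seg)
    \<le> (\<Sum>i\<in>I. \<bar>z i\<bar> * (\<Sum>seg\<in>S. l1norm V (M_prod f U h seg (y i)) * w seg))"
proof -
  have "(\<Sum>seg\<in>S. l1norm V (M_prod f U h seg (\<lambda>v. \<Sum>i\<in>I. z i * y i v)) * w seg)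
      \<le> (\<Sum>seg\<in>S. (\<Sum>i\<in>I. \<bar>z i\<bar> * l1norm V (M_prod f U h seg (y i))) * w seg)"
    unfolding M_prod_sum using assms by (intro sum_mono mult_right_mono l1norm_sum_le) auto
  also have "\<dots> = (\<Sum>i\<in>I. \<bar>z i\<bar> * (\<Sum>seg\<in>S. l1norm V (M_prod f U h seg (y i)) * w seg))"
    by (simp add: sum_distrib_left sum_distrib_right mult_ac) (rule sum.swap)
  finally show ?thesis .
qed

lemma M_prod_pred_state_mass_le:
  fixes f :: "('ob::finite, 'a::finite) model"
  assumes vm: "valid_model H f" and cts: "core_test_sets H f U" and vp: "valid_policy H \<pi>"
    and h: "1 \<le> h" "h + n \<le> H" and \<tau>: "length \<tau> = h - 1" and \<tau>': "length \<tau>' = h - 1"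
  shows "(\<Sum>seg\<in>{seg. length seg = n}.
      l1norm (U (h + n)) (M_prod f U h seg (pred_state f U h \<tau>')) * pol_prob \<pi> h \<tau> seg) \<le> UA_card H U"
proof -
  let ?g = "\<lambda>\<sigma>. l1norm (U (h + n)) (pred_state f U (h + n) \<sigma>)"
  have "l1norm (U (h + n)) (M_prod f U h seg (pred_state f U h \<tau>')) = obs_prob f h \<tau>' seg * ?g (\<tau>' @ seg)"
    if "length seg = n" for seg
    using that h \<tau>' obs_prob_nonneg[OF vm h(1) _ \<tau>', of seg]
    by (simp add: M_prod_pred_state[OF vm cts] l1norm_def abs_mult sum_distrib_left)
  then have "(\<Sum>seg\<in>{seg. length seg = n}.
      l1norm (U (h + n)) (M_prod f U h seg (pred_state f U h \<tau>')) * pol_prob \<pi> h \<tau> seg)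
      = (\<Sum>seg\<in>{seg. length seg = n}. obs_prob f h \<tau>' seg * pol_prob \<pi> h \<tau> seg * ?g (\<tau>' @ seg))"
    by (simp add: mult_ac)
  also have "\<dots> \<le> UA_card H U"
  proof (rule obs_pol_expectation_le[OF vm vp h(1) _ \<tau> \<tau>'])
    fix \<sigma> :: "('ob, 'a) hist"
    assume "length \<sigma> = h - 1 + n"
    then have "?g \<sigma> \<le> card (snd ` U (h + n))"
      using h by (intro l1norm_pred_state_le[OF vm cts]) auto
    also have "\<dots> \<le> UA_card H U"
      using card_action_seqs_le_UA_card[of "h + n" H U] h by simp
    finally show "?g \<sigma> \<le> UA_card H U" by simp
  qed (use h in auto)
  finally show ?thesis .
qed

lemma M_apply_eq_if_orthogonal:
  fixes f :: "('ob::finite, 'a::finite) model"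
  assumes cts: "core_test_sets H f U" and h: "1 \<le> h" "Suc h \<le> H"
    and orth: "\<forall>\<tau>. length \<tau> = h - 1 \<longrightarrow> (\<Sum>v\<in>U h. (x v - y v) * pred_state f U h \<tau> v) = 0"
  shows "M_apply f U ob a h x = M_apply f U ob a h y"
proof
  fix u
  show "M_apply f U ob a h x u = M_apply f U ob a h y u"
  proof (cases "u \<in> U (Suc h)")
    case True
    then have "is_test H (Suc h) u"
      using cts h unfolding core_test_sets_def by auto
    then have "is_test H h (ob # fst u, a # snd u)"
      by (auto simp: is_test_def)
    then have "(\<Sum>v\<in>U h. (x v - y v) * m_vec f U h (ob # fst u, a # snd u) v) = 0"
      using orth h by (intro fspan_orthogonal[OF m_vec_spec(1)[OF cts]]) auto
    then show ?thesis
      using True by (simp add: M_apply_def left_diff_distrib sum_subtractf mult.commute)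
  qed (simp add: M_apply_def)
qed

lemma core_bound_histories:
  fixes f :: "('ob, 'a) model"
  assumes cb: "core_bound H f U \<alpha> (h - 1)" and h: "1 \<le> h"
  obtains hs where "\<forall>\<tau>\<in>set hs. length \<tau> = h - 1"
    and "\<forall>\<tau>. length \<tau> = h - 1 \<longrightarrow> pred_state f U h \<tau> \<in> fspan (pred_state f U h ` set hs)"
    and "opnorm11_le (U h) {..<length hs} (pinv (U h) {..<length hs} (core_mat f U (h - 1) hs)) (1 / \<alpha>)"
proof (cases "h = 1")
  case True
  interpret V: vector_space "fscale :: real \<Rightarrow> (('ob, 'a) test \<Rightarrow> real) \<Rightarrow> (('ob, 'a) test \<Rightarrow> real)"
    by (rule vector_space_fscale)
  \<comment> \<open>K_0 = q_0 is the predictive state of the empty history, the only history of length 0.\<close>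
  have "\<forall>\<tau>. length \<tau> = h - 1 \<longrightarrow> pred_state f U h \<tau> \<in> fspan (pred_state f U h ` set [[]])"
    using True by (auto intro!: V.span_base)
  with cb True show ?thesis
    by (intro that[of "[[]]"]) (auto simp: core_bound_def)
next
  case False
  then have "h - 1 \<noteq> 0" "Suc (h - 1) = h"
    using h by auto
  with cb obtain hs where "\<forall>\<tau>\<in>set hs. length \<tau> = h - 1"
    and "\<forall>\<tau>. length \<tau> = h - 1 \<longrightarrow> pred_state f U h \<tau> \<in> fspan (pred_state f U h ` set hs)"
    and "opnorm11_le (U h) {..<length hs} (pinv (U h) {..<length hs} (core_mat f U (h - 1) hs)) (1 / \<alpha>)"
    unfolding core_bound_def by auto
  then show ?thesis
    by (rule that)
qed

lemma M_prod_eq_core_combination: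
  fixes f :: "('ob::finite, 'a::finite) model" and x :: "('ob, 'a) test \<Rightarrow> real"
  assumes cts: "core_test_sets H f U" and h: "1 \<le> h" "Suc h \<le> H"
    and span: "\<forall>\<tau>. length \<tau> = h - 1 \<longrightarrow> pred_state f U h \<tau> \<in> fspan (pred_state f U h ` set hs)"
    and seg: "seg \<noteq> []"
  defines "z \<equiv> \<lambda>i. \<Sum>s\<in>U h. pinv (U h) {..<length hs} (core_mat f U (h - 1) hs) i s * x s"
  shows "M_prod f U h seg x = M_prod f U h seg (\<lambda>v. \<Sum>i<length hs. z i * pred_state f U h (hs ! i) v)"
proof -
  let ?y = "\<lambda>v. \<Sum>i<length hs. z i * pred_state f U h (hs ! i) v"
  have fin: "finite (U h)"
    using cts h unfolding core_test_sets_def by auto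
  have K: "core_mat f U (h - 1) hs = (\<lambda>v i. pred_state f U h (hs ! i) v)"
    using h by (simp add: core_mat_def)
  \<comment> \<open>?y is K z with z the pseudo-inverse image of x, so x - ?y is orthogonal to the columns of K.\<close>
  have "(\<Sum>v\<in>U h. (x v - ?y v) * pred_state f U h (hs ! i) v) = 0" if "i < length hs" for i
    using pinv_residual_orthogonal[OF fin finite_lessThan[of "length hs"], where k = i and x = x
        and K = "core_mat f U (h - 1) hs"] that
    unfolding z_def K by (simp add: mult.commute)
  then have "\<forall>w\<in>pred_state f U h ` set hs. (\<Sum>v\<in>U h. (x v - ?y v) * w v) = 0"
    by (auto simp: in_set_conv_nth)
  then have "\<forall>\<tau>. length \<tau> = h - 1 \<longrightarrow> (\<Sum>v\<in>U h. (x v - ?y v) * pred_state f U h \<tau> v) = 0"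
    using span by (auto intro: fspan_orthogonal)
  then have "M_apply f U ob a h x = M_apply f U ob a h ?y" for ob a
    by (rule M_apply_eq_if_orthogonal[OF cts h])
  moreover obtain ob a seg' where "seg = (ob, a) # seg'"
    using seg by (metis list.exhaust prod.exhaust)
  ultimately show ?thesis
    by simp
qed

theorem lemma10:
  fixes F :: "('ob::finite, 'a::finite) model set"
    and U :: "nat \<Rightarrow> ('ob, 'a) test set"
    and H :: nat and \<alpha> :: real
    and f :: "('ob, 'a) model" and \<pi> :: "('ob, 'a) policy"
    and \<tau> :: "('ob, 'a) hist" and x :: "('ob, 'a) test \<Rightarrow> real"
    and j1 j2 :: nat
  assumes alpha_pos: "0 < \<alpha>"
    and model_class: "\<forall>g\<in>F. valid_model H g \<and> core_test_sets H g U \<and> (\<forall>h<H. core_bound H g U \<alpha> h)"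
    and obs_in_UH: "\<forall>ob. ([ob], []) \<in> U H"
    and f_in: "f \<in> F"
    and pol: "valid_policy H \<pi>"
    and j: "1 \<le> j1" "j1 \<le> j2" "j2 \<le> H - 1"
    and tau: "length \<tau> = j1 - 1"
  shows "(\<Sum>seg\<in>{seg. length seg = j2 - j1 + 1}.
            l1norm (U (Suc j2)) (M_prod f U j1 seg x) * pol_prob \<pi> j1 \<tau> seg)
         \<le> real (UA_card H U) / \<alpha> * l1norm (U j1) x"
proof -
  have vm: "valid_model H f" and cts: "core_test_sets H f U" and cb: "core_bound H f U \<alpha> (j1 - 1)"
    using model_class f_in j by auto
  have j1: "1 \<le> j1" "Suc j1 \<le> H" and n: "j1 + (j2 - j1 + 1) \<le> H"
    and j2: "j1 + (j2 - j1 + 1) = Suc j2"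
    using j by auto
  obtain hs where hs: "\<forall>\<tau>\<in>set hs. length \<tau> = j1 - 1"
    and span: "\<forall>\<tau>. length \<tau> = j1 - 1 \<longrightarrow> pred_state f U j1 \<tau> \<in> fspan (pred_state f U j1 ` set hs)"
    and bound: "opnorm11_le (U j1) {..<length hs} (pinv (U j1) {..<length hs} (core_mat f U (j1 - 1) hs)) (1 / \<alpha>)"
    using core_bound_histories[OF cb j(1)] by blast
  define z where "z = (\<lambda>i. \<Sum>s\<in>U j1. pinv (U j1) {..<length hs} (core_mat f U (j1 - 1) hs) i s * x s)"
  let ?segs = "{seg :: ('ob, 'a) hist. length seg = j2 - j1 + 1}"
  let ?mass = "\<lambda>y. \<Sum>seg\<in>?segs. l1norm (U (Suc j2)) (M_prod f U j1 seg y) * pol_prob \<pi> j1 \<tau> seg"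
  have "M_prod f U j1 seg x = M_prod f U j1 seg (\<lambda>v. \<Sum>i<length hs. z i * pred_state f U j1 (hs ! i) v)"
    if "seg \<in> ?segs" for seg
    using that unfolding z_def by (intro M_prod_eq_core_combination[OF cts j1 span]) auto
  then have "?mass x = ?mass (\<lambda>v. \<Sum>i<length hs. z i * pred_state f U j1 (hs ! i) v)"
    by (intro sum.cong) auto
  also have "\<dots> \<le> (\<Sum>i<length hs. \<bar>z i\<bar> * ?mass (pred_state f U j1 (hs ! i)))"
    using pol_prob_nonneg[OF pol j(1) _ tau] n by (intro M_prod_mass_sum_le) auto
  also have "\<dots> \<le> (\<Sum>i<length hs. \<bar>z i\<bar> * UA_card H U)"
    using M_prod_pred_state_mass_le[OF vm cts pol j(1) n tau, unfolded j2] hs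
    by (intro sum_mono mult_left_mono) auto
  also have "\<dots> = UA_card H U * l1norm {..<length hs} z"
    by (simp add: l1norm_def sum_distrib_left mult.commute)
  also have "\<dots> \<le> UA_card H U * (1 / \<alpha> * l1norm (U j1) x)"
    using bound by (intro mult_left_mono) (auto simp: opnorm11_le_def z_def)
  finally show ?thesis
    by simp
qed

end
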